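(* Let $X$ be a Banach space, $(M,\mathfrak{M},\mu)$ a measure space containing a measurable set $A$ with $0<\mu(A)<\infty$, $1<p<\infty$ and $n\ge2$. Then $\ell_\infty^n$ is representable in $X$ if and only if $\ell_\infty^n$ is representable in the Lebesgue–Bochner space $L_p(M,\mathfrak{M},\mu;X)$.
   Context: $\ell_\infty^n$ is $\mathbb{R}^n$ with the maximum norm. A Banach space $Y$ is representable in $X$ if for each $\lambda>1$ there is a bounded linear map $T:Y\to X$ with $\|y\|\le\|Ty\|\le\lambda\|y\|$ for all $y\in Y$. *)

theory Defs
  imports "HOL-Analysis.Analysis"
begin

definition linf_norm :: "real^('n::finite) \<Rightarrow> real" where
  "linf_norm y = Max (range (\<lambda>i. \<bar>y $ i\<bar>))"

definition strongly_measurable :: "'b measure \<Rightarrow> ('b \<Rightarrow> 'a::real_normed_vector) \<Rightarrow> bool" where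
  "strongly_measurable M f \<longleftrightarrow>
     (\<exists>s. (\<forall>k. simple_function M (s k)) \<and> (\<forall>x\<in>space M. (\<lambda>k. s k x) \<longlonglongrightarrow> f x))"

text \<open>Representatives of elements of the Lebesgue--Bochner space L_p(M;X) and their norm.\<close>
definition Lp_space :: "'b measure \<Rightarrow> real \<Rightarrow> ('b \<Rightarrow> 'a::real_normed_vector) set" where
  "Lp_space M p = {f. strongly_measurable M f \<and> (\<integral>\<^sup>+x. ennreal (norm (f x) powr p) \<partial>M) < \<infinity>}"

definition Lp_norm :: "'b measure \<Rightarrow> real \<Rightarrow> ('b \<Rightarrow> 'a::real_normed_vector) \<Rightarrow> real" where
  "Lp_norm M p f = (enn2real (\<integral>\<^sup>+x. ennreal (norm (f x) powr p) \<partial>M)) powr (1 / p)"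

definition linf_representable ::
  "('n::finite) itself \<Rightarrow> ('a::real_normed_vector) itself \<Rightarrow> bool" where
  "linf_representable _ _ \<longleftrightarrow>
     (\<forall>c>1. \<exists>T :: real^'n \<Rightarrow> 'a. linear T \<and>
        (\<forall>y. linf_norm y \<le> norm (T y) \<and> norm (T y) \<le> c * linf_norm y))"

text \<open>ell_infty^n is representable in L_p(M;X); a linear map into the quotient space
  is given by a (pointwise) linear choice of representatives.\<close>
definition linf_representable_Lp ::
  "('n::finite) itself \<Rightarrow> 'b measure \<Rightarrow> real \<Rightarrow> ('a::real_normed_vector) itself \<Rightarrow> bool" where
  "linf_representable_Lp _ M p _ \<longleftrightarrow>
     (\<forall>c>1. \<exists>T :: real^'n \<Rightarrow> 'b \<Rightarrow> 'a.
        (\<forall>x. linear (\<lambda>y. T y x)) \<and> (\<forall>y. T y \<in> Lp_space M p) \<and>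
        (\<forall>y. linf_norm y \<le> Lp_norm M p (T y) \<and> Lp_norm M p (T y) \<le> c * linf_norm y))"

end

theory Submission
  imports Defs
begin

text \<open>Functions constant on \<open>A\<close> embed \<open>X\<close> isometrically into \<open>L\<^sub>p(M; X)\<close>, which gives one
  direction. For the converse, let \<open>e\<close> be a sign vector and let \<open>e'\<close> agree with \<open>e\<close> in the
  coordinate \<open>i\<close> and with \<open>-e\<close> elsewhere. Since \<open>e + e' = \<plusminus>2 e\<^sub>i\<close>, convexity of
  \<open>t powr p\<close> makes \<open>(\<parallel>T e\<parallel>\<^sup>p + \<parallel>T e'\<parallel>\<^sup>p) / 2 - \<parallel>T e\<^sub>i\<parallel>\<^sup>p\<close> pointwise nonnegative. For a
  \<open>c\<close>-representation \<open>T\<close> in \<open>L\<^sub>p\<close> this defect integrates to at most \<open>c\<^sup>p - 1\<close>, while each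
  \<open>\<parallel>T e\<parallel>\<^sup>p\<close> integrates to at least \<open>1\<close>, so at some point \<open>x\<close> the total defect of the linear map
  \<open>\<lambda>y. T y x\<close> is tiny compared with its values on sign vectors. Uniform strict convexity of
  \<open>t powr p\<close> then forces \<open>\<parallel>T e\<^sub>i x\<parallel>\<close> to be close to the maximum \<open>m\<close> of \<open>\<parallel>T e x\<parallel>\<close> over sign
  vectors, and a linear map bounded by \<open>m\<close> on sign vectors and by nearly \<open>m\<close> from below on the
  unit vectors is, after rescaling, nearly isometric on \<open>\<ell>\<^sub>\<infinity>\<^sup>n\<close>.\<close>

lemma powr_midpoint_less:
  fixes a b p :: real
  assumes p: "1 < p" and b: "0 \<le> b" and ba: "b < a"
  shows "((a + b) / 2) powr p < (a powr p + b powr p) / 2"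
proof (cases "b = 0")
  case True
  have a: "0 < a" using ba True by simp
  have "2 powr 1 < 2 powr p" using p by (intro powr_less_mono) auto
  then have "a powr p / 2 powr p < a powr p / 2"
    using a by (intro divide_strict_left_mono) auto
  then have "(a / 2) powr p < a powr p / 2"
    using a by (simp add: powr_divide)
  then show ?thesis using True p by simp
next
  case False
  then have b0: "0 < b" using b by simp
  define u where "u = (a + b) / 2"
  have bu: "b < u" and ua: "u < a" using ba by (auto simp: u_def)
  have D: "\<And>x. 0 < x \<Longrightarrow> ((\<lambda>z. z powr p) has_real_derivative p * x powr (p - 1)) (at x)"
    by (rule has_real_derivative_powr)
  obtain z1 where z1: "u < z1" "a powr p - u powr p = (a - u) * (p * z1 powr (p - 1))"
    using MVT2[OF ua, of "\<lambda>z. z powr p" "\<lambda>x. p * x powr (p - 1)"] D b0 bu by force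
  obtain z2 where z2: "b < z2" "z2 < u" "u powr p - b powr p = (u - b) * (p * z2 powr (p - 1))"
    using MVT2[OF bu, of "\<lambda>z. z powr p" "\<lambda>x. p * x powr (p - 1)"] D b0 by force
  have "p * z2 powr (p - 1) < p * z1 powr (p - 1)"
    using z1 z2 b0 p by (simp add: powr_less_mono2)
  moreover have "a - u = u - b" "0 < u - b" using bu by (auto simp: u_def field_simps)
  ultimately have "u powr p - b powr p < a powr p - u powr p"
    using z1(2) z2(3) by (metis mult_strict_left_mono)
  then show ?thesis by (simp add: u_def)
qed

lemma powr_midpoint_le:
  fixes a b p :: real
  assumes p: "1 < p" and "0 \<le> a" "0 \<le> b"
  shows "((a + b) / 2) powr p \<le> (a powr p + b powr p) / 2"
  using powr_midpoint_less[OF p \<open>0 \<le> a\<close>, of b] powr_midpoint_less[OF p \<open>0 \<le> b\<close>, of a]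
  by (cases a b rule: linorder_cases) (auto simp: add.commute)

text \<open>A modulus of uniform strict convexity of \<open>t powr p\<close> near \<open>t = 1\<close>.\<close>
definition powr_midpoint_modulus :: "real \<Rightarrow> real \<Rightarrow> real \<Rightarrow> bool" where
  "powr_midpoint_modulus p \<delta> \<kappa> \<longleftrightarrow>
     (\<forall>b h. 0 \<le> b \<longrightarrow> b \<le> 1 \<longrightarrow> 0 \<le> h \<longrightarrow> h \<le> (1 + b) / 2 \<longrightarrow>
        (1 + b powr p) / 2 - h powr p < \<kappa> \<longrightarrow> 1 - \<delta> < h)"

text \<open>The modulus is the minimum of a positive continuous function on \<open>[0, 1]\<close>.\<close>
lemma powr_midpoint_modulus_exists:
  fixes p \<delta> :: real
  assumes p: "1 < p" and \<delta>: "0 < \<delta>" "\<delta> \<le> 1"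
  obtains \<kappa> where "0 < \<kappa>" and "powr_midpoint_modulus p \<delta> \<kappa>"
proof -
  define g where "g b = (1 + b powr p) / 2 - min ((1 + b) / 2) (1 - \<delta>) powr p" for b
  have g_pos: "0 < g b" if "0 \<le> b" "b \<le> 1" for b
  proof (cases "b = 1")
    case True
    have "(1 - \<delta>) powr p < 1 powr p" using \<delta> p by (intro powr_less_mono2) auto
    then show ?thesis using True \<delta> by (simp add: g_def min_def)
  next
    case False
    have "min ((1 + b) / 2) (1 - \<delta>) powr p \<le> ((1 + b) / 2) powr p"
      using that \<delta> p by (intro powr_mono2) (auto simp: min_def)
    also have "\<dots> < (1 powr p + b powr p) / 2"
      using powr_midpoint_less[OF p \<open>0 \<le> b\<close>, of 1] that False by simp
    finally show ?thesis by (simp add: g_def)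
  qed
  have "continuous_on {0..1} g"
    unfolding g_def using p \<delta> by (intro continuous_intros continuous_on_powr') auto
  then obtain b0 where b0: "b0 \<in> {0..1}" and g_min: "\<And>b. b \<in> {0..1} \<Longrightarrow> g b0 \<le> g b"
    using continuous_attains_inf[of "{0..1}" g] by auto
  show thesis
  proof (rule that)
    show "0 < g b0" using b0 g_pos by simp
    show "powr_midpoint_modulus p \<delta> (g b0)"
      unfolding powr_midpoint_modulus_def
    proof (intro allI impI)
      fix b h :: real
      assume b: "0 \<le> b" "b \<le> 1" and h: "0 \<le> h" "h \<le> (1 + b) / 2"
        and gap: "(1 + b powr p) / 2 - h powr p < g b0"
      show "1 - \<delta> < h"
      proof (rule ccontr)
        assume "\<not> 1 - \<delta> < h"
        then have "h powr p \<le> min ((1 + b) / 2) (1 - \<delta>) powr p"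
          using h p by (intro powr_mono2) auto
        then have "g b \<le> (1 + b powr p) / 2 - h powr p" by (simp add: g_def)
        then show False using g_min[of b] b gap by simp
      qed
    qed
  qed
qed

lemma abs_component_le_linf_norm: "\<bar>y $ i\<bar> \<le> linf_norm (y :: real^'n::finite)"
  unfolding linf_norm_def by (rule Max_ge) auto

lemma linf_norm_attained: "\<exists>i. \<bar>y $ i\<bar> = linf_norm (y :: real^'n::finite)"
proof -
  have "linf_norm y \<in> range (\<lambda>i. \<bar>y $ i\<bar>)" unfolding linf_norm_def by (rule Max_in) auto
  then show ?thesis by auto
qed

lemma linf_norm_le_iff: "linf_norm (y :: real^'n::finite) \<le> r \<longleftrightarrow> (\<forall>i. \<bar>y $ i\<bar> \<le> r)"
  by (metis abs_component_le_linf_norm linf_norm_attained order_trans)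

lemma linf_norm_nonneg: "0 \<le> linf_norm (y :: real^'n::finite)"
  by (meson abs_ge_zero abs_component_le_linf_norm order_trans)

lemma linf_norm_scaleR: "linf_norm (c *\<^sub>R (y :: real^'n::finite)) = \<bar>c\<bar> * linf_norm y"
proof (rule antisym)
  show "linf_norm (c *\<^sub>R y) \<le> \<bar>c\<bar> * linf_norm y"
    unfolding linf_norm_le_iff
    using mult_left_mono[OF abs_component_le_linf_norm, of "\<bar>c\<bar>" y] by (simp add: abs_mult)
  obtain i where "\<bar>y $ i\<bar> = linf_norm y" using linf_norm_attained by blast
  then show "\<bar>c\<bar> * linf_norm y \<le> linf_norm (c *\<^sub>R y)"
    using abs_component_le_linf_norm[of "c *\<^sub>R y" i] by (simp add: abs_mult)
qed

lemma linf_norm_eq_0_iff: "linf_norm (y :: real^'n::finite) = 0 \<longleftrightarrow> y = 0"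
proof
  assume "linf_norm y = 0"
  then show "y = 0" using linf_norm_le_iff[of y 0] by (simp add: vec_eq_iff)
qed (use linf_norm_scaleR[of 0 y] in simp)

lemma linf_norm_axis: "linf_norm (axis i 1 :: real^'n::finite) = 1"
proof (rule antisym)
  show "linf_norm (axis i 1 :: real^'n) \<le> 1"
    unfolding linf_norm_le_iff by (simp add: axis_def)
  show "1 \<le> linf_norm (axis i 1 :: real^'n)"
    using abs_component_le_linf_norm[of "axis i 1 :: real^'n" i] by simp
qed

definition sign_vectors :: "(real^'n::finite) set" where
  "sign_vectors = {e. \<forall>i. e $ i = 1 \<or> e $ i = -1}"

lemma abs_component_sign_vector: "e \<in> sign_vectors \<Longrightarrow> \<bar>e $ i\<bar> = 1"
  unfolding sign_vectors_def by (cases "e $ i = 1") auto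

lemma linf_norm_sign_vector: "e \<in> sign_vectors \<Longrightarrow> linf_norm e = 1"
  using linf_norm_attained[of e] abs_component_sign_vector[of e] by auto

lemma finite_sign_vectors: "finite (sign_vectors :: (real^'n::finite) set)"
proof -
  have "sign_vectors \<subseteq> vec_lambda ` (PiE (UNIV :: 'n set) (\<lambda>_. {-1, 1 :: real}))"
  proof
    fix e :: "real^'n" assume "e \<in> sign_vectors"
    then have "vec_nth e \<in> PiE UNIV (\<lambda>_. {-1, 1})" by (auto simp: sign_vectors_def PiE_iff)
    then show "e \<in> vec_lambda ` (PiE UNIV (\<lambda>_. {-1, 1}))" by (metis image_eqI vec_nth_inverse)
  qed
  then show ?thesis by (rule finite_subset) (simp add: finite_PiE)
qed

lemma card_sign_vectors_pos: "0 < card (sign_vectors :: (real^'n::finite) set)"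
proof -
  have "((\<chi> i. 1) :: real^'n) \<in> sign_vectors" by (simp add: sign_vectors_def)
  then show ?thesis using finite_sign_vectors card_gt_0_iff by blast
qed

text \<open>Coordinates outside \<open>F\<close> are already \<open>\<plusminus>1\<close>; a coordinate \<open>i \<in> F\<close> is removed by
  writing \<open>y\<close> as a convex combination of the two vectors with \<open>y $ i\<close> replaced by \<open>1\<close>
  and by \<open>-1\<close>.\<close>
lemma norm_linear_le_on_cube_aux:
  fixes S :: "real^'n::finite \<Rightarrow> 'a::real_normed_vector"
  assumes S: "linear S" and bound: "\<And>e. e \<in> sign_vectors \<Longrightarrow> norm (S e) \<le> m"
    and "finite F"
  shows "linf_norm y \<le> 1 \<Longrightarrow> (\<And>i. i \<notin> F \<Longrightarrow> \<bar>y $ i\<bar> = 1) \<Longrightarrow> norm (S y) \<le> m"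
  using \<open>finite F\<close>
proof (induction F arbitrary: y rule: finite_induct)
  case empty
  have "y $ j = 1 \<or> y $ j = -1" for j
    using empty.prems(2)[of j] by (cases "0 \<le> y $ j") auto
  then have "y \<in> sign_vectors" by (simp add: sign_vectors_def)
  then show ?case by (rule bound)
next
  case (insert i F)
  define t where "t = y $ i"
  define yp where "yp = (\<chi> j. if j = i then 1 else y $ j)"
  define ym where "ym = (\<chi> j. if j = i then -1 else y $ j)"
  have t: "\<bar>t\<bar> \<le> 1" using insert.prems(1) by (simp add: t_def linf_norm_le_iff)
  have yp: "norm (S yp) \<le> m" and ym: "norm (S ym) \<le> m"
    using insert.prems by (auto simp: yp_def ym_def linf_norm_le_iff intro!: insert.IH)
  have "S y = ((1 + t) / 2) *\<^sub>R S yp + ((1 - t) / 2) *\<^sub>R S ym"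
  proof -
    have "y = ((1 + t) / 2) *\<^sub>R yp + ((1 - t) / 2) *\<^sub>R ym"
      by (auto simp: vec_eq_iff yp_def ym_def t_def field_simps)
    then show ?thesis by (metis S linear_add linear_scale)
  qed
  then have "norm (S y) \<le> ((1 + t) / 2) * norm (S yp) + ((1 - t) / 2) * norm (S ym)"
    using t norm_triangle_ineq[of "((1 + t) / 2) *\<^sub>R S yp" "((1 - t) / 2) *\<^sub>R S ym"] by simp
  also have "\<dots> \<le> ((1 + t) / 2) * m + ((1 - t) / 2) * m"
    using t yp ym by (intro add_mono mult_left_mono) auto
  finally show ?case by (simp add: field_simps)
qed

lemma norm_linear_le_of_sign_vectors:
  fixes S :: "real^'n::finite \<Rightarrow> 'a::real_normed_vector"
  assumes S: "linear S" and bound: "\<And>e. e \<in> sign_vectors \<Longrightarrow> norm (S e) \<le> m"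
  shows "norm (S y) \<le> m * linf_norm y"
proof (cases "y = 0")
  case True
  then show ?thesis using linear_0[OF S] linf_norm_eq_0_iff[of y] by simp
next
  case False
  define r where "r = linf_norm y"
  have r: "0 < r" using False linf_norm_nonneg[of y] linf_norm_eq_0_iff[of y] by (auto simp: r_def)
  have "linf_norm ((1 / r) *\<^sub>R y) = 1" using r by (simp add: linf_norm_scaleR r_def)
  then have "norm (S ((1 / r) *\<^sub>R y)) \<le> m"
    by (intro norm_linear_le_on_cube_aux[OF S bound, of UNIV]) auto
  then show ?thesis using r by (simp add: linear_scale[OF S] r_def field_simps)
qed

text \<open>Reflect \<open>y\<close> in the coordinate \<open>i\<close> where \<open>\<bar>y $ i\<bar>\<close> is maximal: the reflected vector \<open>z\<close>
  still has \<open>\<ell>\<^sub>\<infinity>\<close>-norm \<open>linf_norm y\<close> and \<open>y - z = 2 (y $ i) e\<^sub>i\<close>.\<close>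
lemma norm_linear_ge_of_sign_vectors:
  fixes S :: "real^'n::finite \<Rightarrow> 'a::real_normed_vector"
  assumes S: "linear S" and bound: "\<And>e. e \<in> sign_vectors \<Longrightarrow> norm (S e) \<le> m"
    and axes: "\<And>i. (1 - \<eta>) * m \<le> norm (S (axis i 1))" and m: "0 \<le> m"
  shows "(1 - 2 * \<eta>) * m * linf_norm y \<le> norm (S y)"
proof -
  define r where "r = linf_norm y"
  obtain i where i: "\<bar>y $ i\<bar> = r" using linf_norm_attained unfolding r_def by blast
  define z where "z = y - (2 * y $ i) *\<^sub>R axis i 1"
  have "linf_norm z \<le> r"
    unfolding linf_norm_le_iff
    using i abs_component_le_linf_norm[of y] by (auto simp: z_def axis_def r_def)
  then have Sz: "norm (S z) \<le> m * r"
    using norm_linear_le_of_sign_vectors[OF S bound, of z] m by (meson mult_left_mono order_trans)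
  have "2 * r * ((1 - \<eta>) * m) \<le> norm ((2 * y $ i) *\<^sub>R S (axis i 1))"
    using axes[of i] i by (simp add: abs_mult mult_left_mono)
  also have "(2 * y $ i) *\<^sub>R S (axis i 1) = S y - S z"
    by (simp add: z_def linear_diff[OF S] linear_scale[OF S])
  also have "norm \<dots> \<le> norm (S y) + norm (S z)" by (rule norm_triangle_ineq4)
  finally show ?thesis using Sz by (simp add: r_def algebra_simps)
qed

lemma linf_representation_of_sign_vectors:
  fixes S :: "real^'n::finite \<Rightarrow> 'a::real_normed_vector"
  assumes S: "linear S" and m: "0 < m"
    and bound: "\<And>e. e \<in> sign_vectors \<Longrightarrow> norm (S e) \<le> m"
    and axes: "\<And>i. (1 - \<delta>) * m \<le> norm (S (axis i 1))"
    and \<delta>: "0 < 1 - 2 * \<delta>" and c: "1 \<le> c * (1 - 2 * \<delta>)"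
  shows "\<exists>R :: real^'n \<Rightarrow> 'a. linear R \<and> (\<forall>y. linf_norm y \<le> norm (R y) \<and> norm (R y) \<le> c * linf_norm y)"
proof -
  define k where "k = (1 - 2 * \<delta>) * m"
  have k: "0 < k" using \<delta> m by (simp add: k_def)
  have "linear (\<lambda>y. (1 / k) *\<^sub>R S y)" using S by (rule linear_compose_scale_right)
  moreover have "linf_norm y \<le> norm ((1 / k) *\<^sub>R S y)" for y
  proof -
    have "k * linf_norm y \<le> norm (S y)"
      using norm_linear_ge_of_sign_vectors[OF S bound axes] m by (simp add: k_def)
    then show ?thesis using k by (simp add: field_simps)
  qed
  moreover have "norm ((1 / k) *\<^sub>R S y) \<le> c * linf_norm y" for y
  proof -
    have "norm (S y) \<le> m * linf_norm y" by (rule norm_linear_le_of_sign_vectors[OF S bound])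
    also have "\<dots> \<le> c * k * linf_norm y"
      using c m linf_norm_nonneg[of y] by (simp add: k_def mult_right_mono)
    finally show ?thesis using k by (simp add: field_simps)
  qed
  ultimately show ?thesis by (intro exI[of _ "\<lambda>y. (1 / k) *\<^sub>R S y"]) simp
qed

definition flip_except :: "real^'n::finite \<Rightarrow> 'n \<Rightarrow> real^'n" where
  "flip_except e i = (\<chi> j. if j = i then e $ i else - e $ j)"

lemma flip_except_sign_vector: "e \<in> sign_vectors \<Longrightarrow> flip_except e i \<in> sign_vectors"
  by (auto simp: sign_vectors_def flip_except_def)

lemma add_flip_except: "e + flip_except e i = (2 * e $ i) *\<^sub>R axis i 1"
  by (auto simp: vec_eq_iff flip_except_def axis_def)

lemma norm_axis_le_flip_except:
  fixes S :: "real^'n::finite \<Rightarrow> 'a::real_normed_vector"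
  assumes S: "linear S" and e: "e \<in> sign_vectors"
  shows "2 * norm (S (axis i 1)) \<le> norm (S e) + norm (S (flip_except e i))"
proof -
  have "S e + S (flip_except e i) = (2 * e $ i) *\<^sub>R S (axis i 1)"
    by (metis add_flip_except S linear_add linear_scale)
  then have "norm (S e + S (flip_except e i)) = 2 * norm (S (axis i 1))"
    using abs_component_sign_vector[OF e] by (simp add: abs_mult)
  then show ?thesis using norm_triangle_ineq[of "S e" "S (flip_except e i)"] by simp
qed

definition sign_defect ::
  "real \<Rightarrow> (real^'n::finite \<Rightarrow> 'a::real_normed_vector) \<Rightarrow> real^'n \<Rightarrow> 'n \<Rightarrow> real" where
  "sign_defect p S e i =
     (norm (S e) powr p + norm (S (flip_except e i)) powr p) / 2 - norm (S (axis i 1)) powr p"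

lemma sign_defect_nonneg:
  fixes S :: "real^'n::finite \<Rightarrow> 'a::real_normed_vector"
  assumes S: "linear S" and p: "1 < p" and e: "e \<in> sign_vectors"
  shows "0 \<le> sign_defect p S e i"
proof -
  have "norm (S (axis i 1)) powr p \<le> ((norm (S e) + norm (S (flip_except e i))) / 2) powr p"
    using norm_axis_le_flip_except[OF S e, of i] p by (intro powr_mono2) auto
  also have "\<dots> \<le> (norm (S e) powr p + norm (S (flip_except e i)) powr p) / 2"
    using p by (intro powr_midpoint_le) auto
  finally show ?thesis by (simp add: sign_defect_def)
qed

lemma axis_lower_bound_of_sign_defect:
  fixes S :: "real^'n::finite \<Rightarrow> 'a::real_normed_vector"
  assumes S: "linear S" and p: "1 < p"
    and gap: "powr_midpoint_modulus p \<delta> \<kappa>"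
    and e: "e \<in> sign_vectors" and m: "0 < m" "norm (S e) = m"
    and max: "\<And>e'. e' \<in> sign_vectors \<Longrightarrow> norm (S e') \<le> m"
    and defect: "sign_defect p S e i < \<kappa> * m powr p"
  shows "(1 - \<delta>) * m \<le> norm (S (axis i 1))"
proof -
  define b where "b = norm (S (flip_except e i)) / m"
  define h where "h = norm (S (axis i 1)) / m"
  have "0 \<le> b" "b \<le> 1"
    using m max[OF flip_except_sign_vector[OF e]] by (auto simp: b_def)
  moreover have "0 \<le> h" "h \<le> (1 + b) / 2"
    using m norm_axis_le_flip_except[OF S e, of i] by (auto simp: h_def b_def field_simps)
  moreover have "(1 + b powr p) / 2 - h powr p = sign_defect p S e i / m powr p"
    using m by (simp add: sign_defect_def b_def h_def powr_divide diff_divide_distrib add_divide_distrib)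
  then have "(1 + b powr p) / 2 - h powr p < \<kappa>"
    using defect m by (simp add: divide_less_eq)
  ultimately have "1 - \<delta> < h" using gap by (simp add: powr_midpoint_modulus_def)
  then show ?thesis using m by (simp add: h_def field_simps)
qed

lemma sign_vector_bounds_of_small_defect:
  fixes S :: "real^'n::finite \<Rightarrow> 'a::real_normed_vector"
  assumes S: "linear S" and p: "1 < p" and \<kappa>: "0 < \<kappa>"
    and gap: "powr_midpoint_modulus p \<delta> \<kappa>"
    and small: "(\<Sum>e\<in>sign_vectors. \<Sum>i\<in>UNIV. sign_defect p S e i)
      < \<kappa> / card (sign_vectors :: (real^'n) set) * (\<Sum>e\<in>sign_vectors. norm (S e) powr p)"
  shows "\<exists>m>0. (\<forall>e\<in>sign_vectors. norm (S e) \<le> m) \<and> (\<forall>i. (1 - \<delta>) * m \<le> norm (S (axis i 1)))"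
proof -
  define N where "N = card (sign_vectors :: (real^'n) set)"
  have N: "0 < N" by (simp add: N_def card_sign_vectors_pos)
  have fin: "finite (sign_vectors :: (real^'n) set)" by (rule finite_sign_vectors)
  have "sign_vectors \<noteq> ({} :: (real^'n) set)" using N by (auto simp: N_def)
  then have "Max ((\<lambda>e. norm (S e)) ` sign_vectors) \<in> (\<lambda>e. norm (S e)) ` sign_vectors"
    using fin by (intro Max_in) auto
  then obtain e where e: "e \<in> sign_vectors" and "norm (S e) = Max ((\<lambda>e. norm (S e)) ` sign_vectors)"
    by auto
  then have max: "\<And>e'. e' \<in> sign_vectors \<Longrightarrow> norm (S e') \<le> norm (S e)"
    using fin by simp
  define m where "m = norm (S e)"
  have defect_nonneg: "0 \<le> sign_defect p S e' i" if "e' \<in> sign_vectors" for e' i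
    using sign_defect_nonneg[OF S p that] .
  have "(\<Sum>e\<in>sign_vectors. norm (S e) powr p) \<le> N * m powr p"
    unfolding N_def m_def using p max by (intro sum_bounded_above powr_mono2) auto
  then have "\<kappa> / N * (\<Sum>e\<in>sign_vectors. norm (S e) powr p) \<le> \<kappa> / N * (N * m powr p)"
    using \<kappa> N by (intro mult_left_mono) auto
  then have total: "(\<Sum>e\<in>sign_vectors. \<Sum>i\<in>UNIV. sign_defect p S e i) < \<kappa> * m powr p"
    using small N by (simp add: N_def)
  have defect_le_total: "sign_defect p S e i \<le> (\<Sum>e\<in>sign_vectors. \<Sum>i\<in>UNIV. sign_defect p S e i)" for i
  proof -
    have "sign_defect p S e i \<le> (\<Sum>i\<in>UNIV. sign_defect p S e i)"
      by (rule member_le_sum) (use defect_nonneg e in auto)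
    also have "\<dots> \<le> (\<Sum>e\<in>sign_vectors. \<Sum>i\<in>UNIV. sign_defect p S e i)"
      by (rule member_le_sum[OF e _ fin]) (use defect_nonneg in \<open>auto intro: sum_nonneg\<close>)
    finally show ?thesis .
  qed
  have "0 < m"
  proof (rule ccontr)
    assume "\<not> 0 < m"
    then have "\<kappa> * m powr p = 0" by (simp add: m_def)
    moreover have "0 \<le> (\<Sum>e\<in>sign_vectors. \<Sum>i\<in>UNIV. sign_defect p S e i)"
      using defect_nonneg by (simp add: sum_nonneg)
    ultimately show False using total by linarith
  qed
  moreover have "(1 - \<delta>) * m \<le> norm (S (axis i 1))" for i
    using axis_lower_bound_of_sign_defect[OF S p gap e \<open>0 < m\<close>] max defect_le_total[of i] total
    by (simp add: m_def)
  ultimately show ?thesis using max unfolding m_def by blast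
qed

lemma Lp_space_borel_measurable:
  assumes "f \<in> Lp_space M p"
  shows "f \<in> borel_measurable M"
proof -
  obtain s where s: "\<And>k. simple_function M (s k)" "\<And>x. x \<in> space M \<Longrightarrow> (\<lambda>k. s k x) \<longlonglongrightarrow> f x"
    using assms unfolding Lp_space_def strongly_measurable_def by blast
  show ?thesis
    by (rule borel_measurable_LIMSEQ_metric[of s]) (auto intro: borel_measurable_simple_function s)
qed

lemma
  fixes f :: "'b \<Rightarrow> 'a::real_normed_vector"
  assumes f: "f \<in> Lp_space M p" and p: "0 < p"
  shows integrable_norm_powr_Lp: "integrable M (\<lambda>x. norm (f x) powr p)"
    and integral_norm_powr_Lp: "(\<integral>x. norm (f x) powr p \<partial>M) = Lp_norm M p f powr p"
proof -
  have [measurable]: "f \<in> borel_measurable M" using f by (rule Lp_space_borel_measurable)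
  define I where "I = (\<integral>\<^sup>+x. ennreal (norm (f x) powr p) \<partial>M)"
  have "I < \<infinity>" using f by (simp add: Lp_space_def I_def)
  then have I: "I = ennreal (enn2real I)" by simp
  show "integrable M (\<lambda>x. norm (f x) powr p)"
    by (rule integrableI_nn_integral_finite[of _ _ "enn2real I"]) (use I in \<open>auto simp: I_def\<close>)
  have "(\<integral>x. norm (f x) powr p \<partial>M) = enn2real I"
    unfolding I_def by (rule integral_eq_nn_integral) auto
  also have "\<dots> = Lp_norm M p f powr p"
    unfolding Lp_norm_def I_def[symmetric] using p by (simp add: powr_powr)
  finally show "(\<integral>x. norm (f x) powr p \<partial>M) = Lp_norm M p f powr p" .
qed

lemma integral_norm_powr_Lp_bounds:
  fixes f :: "'b \<Rightarrow> 'a::real_normed_vector"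
  assumes f: "f \<in> Lp_space M p" and p: "0 < p" and "1 \<le> Lp_norm M p f" "Lp_norm M p f \<le> c"
  shows "1 \<le> (\<integral>x. norm (f x) powr p \<partial>M)" "(\<integral>x. norm (f x) powr p \<partial>M) \<le> c powr p"
proof -
  have "1 \<le> Lp_norm M p f powr p" "Lp_norm M p f powr p \<le> c powr p"
    using assms(3,4) p by (simp_all add: ge_one_powr_ge_zero powr_mono2)
  then show "1 \<le> (\<integral>x. norm (f x) powr p \<partial>M)" "(\<integral>x. norm (f x) powr p \<partial>M) \<le> c powr p"
    by (simp_all add: integral_norm_powr_Lp[OF f p])
qed

lemma
  fixes v :: "'a::real_normed_vector"
  assumes A: "A \<in> sets M" "0 < emeasure M A" "emeasure M A < \<infinity>" and p: "0 < p"
  shows indicator_scaleR_in_Lp_space: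
      "(\<lambda>x. (indicator A x * measure M A powr (-1 / p)) *\<^sub>R v) \<in> Lp_space M p"
    and Lp_norm_indicator_scaleR:
      "Lp_norm M p (\<lambda>x. (indicator A x * measure M A powr (-1 / p)) *\<^sub>R v) = norm v"
proof -
  define \<alpha> where "\<alpha> = measure M A"
  have \<alpha>: "emeasure M A = ennreal \<alpha>"
    using A by (simp add: \<alpha>_def emeasure_eq_ennreal_measure)
  then have \<alpha>_pos: "0 < \<alpha>" using A by simp
  define f where "f x = (indicator A x * \<alpha> powr (-1 / p)) *\<^sub>R v" for x
  have "(\<alpha> powr (-1 / p)) powr p = \<alpha> powr (-1 / p * p)" by (rule powr_powr)
  also have "-1 / p * p = -1" using p by simp
  also have "\<alpha> powr (-1) = 1 / \<alpha>" using \<alpha>_pos by (simp add: powr_minus divide_inverse)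
  finally have "norm (f x) powr p = norm v powr p / \<alpha> * indicator A x" for x
    using p \<alpha>_pos by (auto simp: f_def indicator_def powr_mult)
  then have "(\<integral>\<^sup>+x. ennreal (norm (f x) powr p) \<partial>M) = (\<integral>\<^sup>+x. ennreal (norm v powr p / \<alpha>) * indicator A x \<partial>M)"
    by (intro nn_integral_cong) (simp add: indicator_def)
  also have "\<dots> = ennreal (norm v powr p / \<alpha>) * emeasure M A"
    by (rule nn_integral_cmult_indicator[OF A(1)])
  also have "\<dots> = ennreal (norm v powr p)"
    using \<alpha>_pos by (simp add: \<alpha> ennreal_mult[symmetric])
  finally have nn: "(\<integral>\<^sup>+x. ennreal (norm (f x) powr p) \<partial>M) = ennreal (norm v powr p)" .
  have f_eq: "(\<lambda>x. (indicator A x * measure M A powr (-1 / p)) *\<^sub>R v) = f"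
    by (simp add: fun_eq_iff f_def \<alpha>_def)
  have "simple_function M f"
    unfolding f_def
    by (rule simple_function_compose1[where g="\<lambda>t. (t * \<alpha> powr (-1 / p)) *\<^sub>R v"]) (simp add: A)
  then show "(\<lambda>x. (indicator A x * measure M A powr (-1 / p)) *\<^sub>R v) \<in> Lp_space M p"
    unfolding f_eq Lp_space_def strongly_measurable_def by (auto simp: nn)
  have "Lp_norm M p f = (norm v powr p) powr (1 / p)"
    unfolding Lp_norm_def nn by simp
  also have "\<dots> = norm v"
    using p by (simp add: powr_powr)
  finally show "Lp_norm M p (\<lambda>x. (indicator A x * measure M A powr (-1 / p)) *\<^sub>R v) = norm v"
    by (simp only: f_eq)
qed

lemma linf_representable_Lp_if_linf_representable:
  assumes "A \<in> sets M" "0 < emeasure M A" "emeasure M A < \<infinity>" "0 < p"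
    and rep: "linf_representable TYPE('n::finite) TYPE('a::real_normed_vector)"
  shows "linf_representable_Lp TYPE('n) M p TYPE('a)"
  unfolding linf_representable_Lp_def
proof (intro allI impI)
  fix c :: real assume "1 < c"
  then obtain T :: "real^'n \<Rightarrow> 'a" where T: "linear T"
    and bounds: "\<And>y. linf_norm y \<le> norm (T y) \<and> norm (T y) \<le> c * linf_norm y"
    using rep unfolding linf_representable_def by blast
  define T' where "T' y x = (indicator A x * measure M A powr (-1 / p)) *\<^sub>R T y" for y x
  have "linear (\<lambda>y. T' y x)" for x
    unfolding T'_def using T by (rule linear_compose_scale_right)
  moreover have "T' y \<in> Lp_space M p" "Lp_norm M p (T' y) = norm (T y)" for y
    unfolding T'_def
    by (rule indicator_scaleR_in_Lp_space[OF assms(1-4)] Lp_norm_indicator_scaleR[OF assms(1-4)])+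
  ultimately show "\<exists>T :: real^'n \<Rightarrow> 'b \<Rightarrow> 'a. (\<forall>x. linear (\<lambda>y. T y x)) \<and> (\<forall>y. T y \<in> Lp_space M p) \<and>
      (\<forall>y. linf_norm y \<le> Lp_norm M p (T y) \<and> Lp_norm M p (T y) \<le> c * linf_norm y)"
    using bounds by (intro exI[of _ T']) auto
qed

lemma exists_less_of_integral_less:
  fixes f g :: "'b \<Rightarrow> real"
  assumes "integrable M f" "integrable M g" "integral\<^sup>L M f < integral\<^sup>L M g"
  shows "\<exists>x\<in>space M. f x < g x"
  using integral_mono[OF assms(2,1)] assms(3) by force

lemma exists_point_with_small_sign_defect:
  fixes T :: "real^'n::finite \<Rightarrow> 'b \<Rightarrow> 'a::real_normed_vector"
  assumes p: "1 < p" and c: "1 < c" and Lp: "\<And>y. T y \<in> Lp_space M p"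
    and bounds: "\<And>y. linf_norm y \<le> Lp_norm M p (T y) \<and> Lp_norm M p (T y) \<le> c * linf_norm y"
  shows "\<exists>x. (\<Sum>e\<in>sign_vectors. \<Sum>i\<in>UNIV. sign_defect p (\<lambda>y. T y x) e i)
    < 2 * real CARD('n) * (c powr p - 1) * (\<Sum>e\<in>sign_vectors. norm (T e x) powr p)"
proof -
  define N where "N = real (card (sign_vectors :: (real^'n) set))"
  define n where "n = real CARD('n)"
  have N: "0 < N" by (simp add: N_def card_sign_vectors_pos)
  have "1 powr p < c powr p" using c p by (intro powr_less_mono2) auto
  then have "0 < c powr p - 1" by simp
  define I where "I y = (\<integral>x. norm (T y x) powr p \<partial>M)" for y
  have int: "integrable M (\<lambda>x. norm (T y x) powr p)" for y
    using Lp p by (simp add: integrable_norm_powr_Lp)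
  have I_bounds: "1 \<le> I y" "I y \<le> c powr p" if "linf_norm y = 1" for y
    using integral_norm_powr_Lp_bounds[OF Lp, of y] bounds[of y] that p unfolding I_def by auto
  have defect_le: "(I e + I (flip_except e i)) / 2 - I (axis i 1) \<le> c powr p - 1"
    if "e \<in> sign_vectors" for e i
    using I_bounds[OF linf_norm_sign_vector[OF that]] I_bounds(1)[OF linf_norm_axis[of i]]
      I_bounds[OF linf_norm_sign_vector[OF flip_except_sign_vector[OF that, of i]]]
    by (simp add: field_simps)
  have "integral\<^sup>L M (\<lambda>x. \<Sum>e\<in>sign_vectors. \<Sum>i\<in>UNIV. sign_defect p (\<lambda>y. T y x) e i)
      = (\<Sum>e\<in>sign_vectors. \<Sum>i\<in>UNIV. (I e + I (flip_except e i)) / 2 - I (axis i 1))"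
    using int by (simp add: sign_defect_def I_def)
  also have "\<dots> \<le> (\<Sum>e\<in>(sign_vectors :: (real^'n) set). \<Sum>i\<in>(UNIV :: 'n set). c powr p - 1)"
    by (intro sum_mono defect_le)
  also have "\<dots> = N * n * (c powr p - 1)" by (simp add: N_def n_def)
  also have "\<dots> < 2 * n * (c powr p - 1) * N"
    using N \<open>0 < c powr p - 1\<close> by (simp add: n_def)
  also have "\<dots> \<le> 2 * n * (c powr p - 1) * (\<Sum>e\<in>sign_vectors. I e)"
    using sum_mono[of sign_vectors "\<lambda>_. 1" I] I_bounds linf_norm_sign_vector \<open>0 < c powr p - 1\<close>
    by (intro mult_left_mono) (auto simp: N_def n_def)
  also have "\<dots> = integral\<^sup>L M (\<lambda>x. 2 * n * (c powr p - 1) * (\<Sum>e\<in>sign_vectors. norm (T e x) powr p))"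
    using int by (simp add: I_def)
  finally have less: "integral\<^sup>L M (\<lambda>x. \<Sum>e\<in>sign_vectors. \<Sum>i\<in>UNIV. sign_defect p (\<lambda>y. T y x) e i)
    < integral\<^sup>L M (\<lambda>x. 2 * n * (c powr p - 1) * (\<Sum>e\<in>sign_vectors. norm (T e x) powr p))" .
  have int_defect: "integrable M (\<lambda>x. \<Sum>e\<in>sign_vectors. \<Sum>i\<in>UNIV. sign_defect p (\<lambda>y. T y x) e i)"
    unfolding sign_defect_def using int by simp
  have int_mass: "integrable M (\<lambda>x. 2 * n * (c powr p - 1) * (\<Sum>e\<in>sign_vectors. norm (T e x) powr p))"
    using int by simp
  obtain x where "(\<Sum>e\<in>sign_vectors. \<Sum>i\<in>UNIV. sign_defect p (\<lambda>y. T y x) e i)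
      < 2 * n * (c powr p - 1) * (\<Sum>e\<in>sign_vectors. norm (T e x) powr p)"
    using exists_less_of_integral_less[OF int_defect int_mass less] by blast
  then show ?thesis unfolding n_def by blast
qed

lemma linf_representable_if_linf_representable_Lp:
  assumes p: "1 < p"
    and rep: "linf_representable_Lp TYPE('n::finite) M p TYPE('a::real_normed_vector)"
  shows "linf_representable TYPE('n) TYPE('a)"
  unfolding linf_representable_def
proof (intro allI impI)
  fix c' :: real assume "1 < c'"
  define \<delta> where "\<delta> = (1 - 1 / c') / 4"
  have \<delta>: "0 < \<delta>" "\<delta> \<le> 1" "0 < 1 - 2 * \<delta>" "1 \<le> c' * (1 - 2 * \<delta>)"
    using \<open>1 < c'\<close> by (simp_all add: \<delta>_def field_simps)
  obtain \<kappa> where \<kappa>: "0 < \<kappa>"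
    and gap: "powr_midpoint_modulus p \<delta> \<kappa>"
    using powr_midpoint_modulus_exists[OF p \<delta>(1,2)] by blast
  define N where "N = real (card (sign_vectors :: (real^'n) set))"
  define n where "n = real CARD('n)"
  have "0 < N" "0 < n" by (simp_all add: N_def n_def card_sign_vectors_pos)
  define c where "c = (1 + \<kappa> / (2 * n * N)) powr (1 / p)"
  have base: "1 < 1 + \<kappa> / (2 * n * N)" using \<kappa> \<open>0 < N\<close> \<open>0 < n\<close> by simp
  have "1 powr (1 / p) < c" unfolding c_def using base p by (intro powr_less_mono2) auto
  then have "1 < c" by simp
  have "c powr p = 1 + \<kappa> / (2 * n * N)" using base p by (simp add: c_def powr_powr)
  then have scale: "2 * real CARD('n) * (c powr p - 1) = \<kappa> / card (sign_vectors :: (real^'n) set)"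
    using \<open>0 < n\<close> by (simp add: n_def N_def field_simps)
  obtain T :: "real^'n \<Rightarrow> 'b \<Rightarrow> 'a" where lin: "\<And>x. linear (\<lambda>y. T y x)"
    and Lp: "\<And>y. T y \<in> Lp_space M p"
    and bounds: "\<And>y. linf_norm y \<le> Lp_norm M p (T y) \<and> Lp_norm M p (T y) \<le> c * linf_norm y"
    using rep \<open>1 < c\<close> unfolding linf_representable_Lp_def by blast
  obtain x where "(\<Sum>e\<in>sign_vectors. \<Sum>i\<in>UNIV. sign_defect p (\<lambda>y. T y x) e i)
      < \<kappa> / card (sign_vectors :: (real^'n) set) * (\<Sum>e\<in>sign_vectors. norm (T e x) powr p)"
    using exists_point_with_small_sign_defect[OF p \<open>1 < c\<close> Lp bounds] unfolding scale ..
  from sign_vector_bounds_of_small_defect[OF lin[of x] p \<kappa> gap this]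
  obtain m where "0 < m" "\<And>e. e \<in> sign_vectors \<Longrightarrow> norm (T e x) \<le> m"
    "\<And>i. (1 - \<delta>) * m \<le> norm (T (axis i 1) x)"
    by auto
  from linf_representation_of_sign_vectors[OF lin[of x] this \<delta>(3,4)]
  show "\<exists>R :: real^'n \<Rightarrow> 'a. linear R \<and>
      (\<forall>y. linf_norm y \<le> norm (R y) \<and> norm (R y) \<le> c' * linf_norm y)" .
qed

theorem theorem2p3:
  fixes M :: "'b measure" and A :: "'b set" and p :: real
  assumes "A \<in> sets M" and "0 < emeasure M A" and "emeasure M A < \<infinity>"
    and "1 < p"
    and "CARD('n::finite) \<ge> 2"
  shows "linf_representable TYPE('n) TYPE('a::banach)
     \<longleftrightarrow> linf_representable_Lp TYPE('n) M p TYPE('a)"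
proof
  have "0 < p" using \<open>1 < p\<close> by simp
  then show "linf_representable TYPE('n) TYPE('a) \<Longrightarrow> linf_representable_Lp TYPE('n) M p TYPE('a)"
    by (rule linf_representable_Lp_if_linf_representable[OF assms(1-3)])
  show "linf_representable_Lp TYPE('n) M p TYPE('a) \<Longrightarrow> linf_representable TYPE('n) TYPE('a)"
    by (rule linf_representable_if_linf_representable_Lp[OF assms(4)])
qed

end
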